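(* Let $h$ be a positive integer. The sequences $(n_h(k))_{k=1}^{\infty}$, $(m_h(k))_{k=1}^{\infty}$, $(n^{\sharp}_h(k))_{k=1}^{\infty}$, and $(m^{\sharp}_h(k))_{k=1}^{\infty}$ are strictly increasing.
   Context: For integers $a<b$, an interval of integers is $[a,b]=\{j\in\mathbf{Z}: a\le j\le b\}$ (so every interval has at least two elements), and $[0,0]=\{0\}$. For a set $A$ of integers, $hA=\{a_1+\cdots+a_h: a_i\in A\}$ (summands not necessarily distinct). For a nonempty finite set $A\subseteq\mathbf{Z}$ with $0\in hA$, $\ell_h(A)$ is the largest integer $n\ge 0$ with $[0,n]\subseteq hA$. For a nonempty finite set $A\subseteq\mathbf{Z}$, $\ell^{\sharp}_h(A)$ is the largest integer $n\ge 1$ such that $[c,c+n]\subseteq hA$ for some $c\in\mathbf{Z}$ (undefined if $hA$ contains no interval). With $\mathcal{A}_X(k)=\{A\subseteq X:|A|=k\}$ and $\mathbf{N}_0=\{0,1,2,\ldots\}$, define (maxima over those $A$ for which the quantity is defined) $n_h(k)=\max\{\ell_h(A): A\in\mathcal{A}_{\mathbf{N}_0}(k)\}$, $n^{\sharp}_h(k)=\max\{\ell^{\sharp}_h(A): A\in\mathcal{A}_{\mathbf{N}_0}(k)\}$, $m_h(k)=\max\{\ell_h(A): A\in\mathcal{A}_{\mathbf{Z}}(k)\}$, $m^{\sharp}_h(k)=\max\{\ell^{\sharp}_h(A): A\in\mathcal{A}_{\mathbf{Z}}(k)\}$. *)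

theory Defs
  imports Main
begin

definition sumset :: "nat \<Rightarrow> int set \<Rightarrow> int set" where
  "sumset h A = {(\<Sum>i<h. f i) | f. \<forall>i<h. f i \<in> A}"

text \<open>ell h A: largest n >= 0 with [0,n] subset of hA (meaningful when 0 in hA).
  Note {0..0} = {0} matches the convention [0,0] = {0}.\<close>
definition ell :: "nat \<Rightarrow> int set \<Rightarrow> nat" where
  "ell h A = Max {n::nat. {0..int n} \<subseteq> sumset h A}"

definition ell_sharp :: "nat \<Rightarrow> int set \<Rightarrow> nat" where
  "ell_sharp h A = Max {n::nat. n \<ge> 1 \<and> (\<exists>c. {c..c + int n} \<subseteq> sumset h A)}"

definition has_interval :: "nat \<Rightarrow> int set \<Rightarrow> bool" where
  "has_interval h A \<longleftrightarrow> (\<exists>c n. n \<ge> (1::nat) \<and> {c..c + int n} \<subseteq> sumset h A)"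

definition n_h :: "nat \<Rightarrow> nat \<Rightarrow> nat" where
  "n_h h k = Max {ell h A | A. A \<subseteq> {0..} \<and> finite A \<and> card A = k \<and> 0 \<in> sumset h A}"

definition m_h :: "nat \<Rightarrow> nat \<Rightarrow> nat" where
  "m_h h k = Max {ell h A | A. finite A \<and> card A = k \<and> 0 \<in> sumset h A}"

definition n_sharp :: "nat \<Rightarrow> nat \<Rightarrow> nat" where
  "n_sharp h k = Max {ell_sharp h A | A. A \<subseteq> {0..} \<and> finite A \<and> card A = k \<and> has_interval h A}"

definition m_sharp :: "nat \<Rightarrow> nat \<Rightarrow> nat" where
  "m_sharp h k = Max {ell_sharp h A | A. finite A \<and> card A = k \<and> has_interval h A}"

end

theory Submission
  imports Defs "HOL-Library.FuncSet"
begin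

(* Let [c, c + n] be a longest interval in hA (with c = 0 for ell_h) and write
   c = a_1 + ... + a_h with all a_i in A. For x = a_h + n + 1 the sum c + n + 1 lies in
   h(A \<union> {x}) but not in hA, so x is not in A. Hence A \<union> {x} has one more element, its h-fold
   sumset contains the longer interval [c, c + n + 1], and it stays inside N_0 if A does,
   because x > a_h. So every value attained by a k-element set is beaten by a (k+1)-element
   set, and all these values are bounded by k^h. *)

lemma sumset_eq_image_PiE: "sumset h A = (\<lambda>f. \<Sum>i<h. f i) ` PiE {..<h} (\<lambda>_. A)"
proof (intro equalityI subsetI)
  fix s assume "s \<in> sumset h A"
  then obtain f where "s = (\<Sum>i<h. f i)" "\<forall>i<h. f i \<in> A"
    unfolding sumset_def by blast
  then show "s \<in> (\<lambda>f. \<Sum>i<h. f i) ` PiE {..<h} (\<lambda>_. A)"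
    by (intro image_eqI[where x = "restrict f {..<h}"]) auto
qed (auto simp: sumset_def)

lemma finite_sumset: "finite A \<Longrightarrow> finite (sumset h A)"
  by (simp add: sumset_eq_image_PiE finite_PiE)

lemma card_sumset_le: "finite A \<Longrightarrow> card (sumset h A) \<le> card A ^ h"
proof -
  assume "finite A"
  then have "card (sumset h A) \<le> card (PiE {..<h} (\<lambda>_. A))"
    unfolding sumset_eq_image_PiE by (intro card_image_le finite_PiE) auto
  then show ?thesis by (simp add: card_PiE)
qed

lemma sumset_mono: "A \<subseteq> B \<Longrightarrow> sumset h A \<subseteq> sumset h B"
  unfolding sumset_def by blast

lemma zero_in_sumset: "0 \<in> A \<Longrightarrow> 0 \<in> sumset h A"
  unfolding sumset_def by (auto intro!: exI[of _ "\<lambda>_. 0"])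

lemma subset_sumset_if_zero:
  assumes "h \<ge> 1" "0 \<in> A"
  shows "A \<subseteq> sumset h A"
proof
  fix x assume "x \<in> A"
  define f where "f = (\<lambda>i::nat. if i = 0 then x else 0)"
  have "(\<Sum>i<h. f i) = x"
    using assms(1) by (simp add: f_def)
  moreover have "\<forall>i<h. f i \<in> A" using assms(2) \<open>x \<in> A\<close> by (simp add: f_def)
  ultimately show "x \<in> sumset h A" unfolding sumset_def by blast
qed

lemma length_lt_card_power_if_interval_subset_sumset:
  assumes "finite A" "{c..c + int n} \<subseteq> sumset h A"
  shows "n < card A ^ h"
proof -
  have "Suc n = card {c..c + int n}" by simp
  also have "\<dots> \<le> card (sumset h A)" using assms by (intro card_mono finite_sumset)
  also have "\<dots> \<le> card A ^ h" using assms(1) by (rule card_sumset_le)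
  finally show ?thesis by simp
qed

lemma finite_interval_lengths:
  assumes "finite A"
  shows "finite {n. \<exists>c. {c..c + int n} \<subseteq> sumset h A}"
proof (rule finite_subset)
  show "{n. \<exists>c. {c..c + int n} \<subseteq> sumset h A} \<subseteq> {..<card A ^ h}"
    using length_lt_card_power_if_interval_subset_sumset[OF assms] by blast
qed simp

lemma
  assumes "finite A"
  shows ell_ge: "{0..int n} \<subseteq> sumset h A \<Longrightarrow> n \<le> ell h A"
    and ell_interval_subset: "0 \<in> sumset h A \<Longrightarrow> {0..int (ell h A)} \<subseteq> sumset h A"
proof -
  let ?N = "{n::nat. {0..int n} \<subseteq> sumset h A}"
  have fin: "finite ?N" by (rule finite_subset[OF _ finite_interval_lengths[OF assms]]) force
  then show "{0..int n} \<subseteq> sumset h A \<Longrightarrow> n \<le> ell h A"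
    unfolding ell_def by (intro Max_ge) auto
  assume "0 \<in> sumset h A"
  then have "0 \<in> ?N" by simp
  with fin have "ell h A \<in> ?N" unfolding ell_def by (metis Max_in empty_iff)
  then show "{0..int (ell h A)} \<subseteq> sumset h A" by simp
qed

lemma
  assumes "finite A"
  shows ell_sharp_ge: "n \<ge> 1 \<Longrightarrow> {c..c + int n} \<subseteq> sumset h A \<Longrightarrow> n \<le> ell_sharp h A"
    and ell_sharp_interval_subset:
      "has_interval h A \<Longrightarrow> \<exists>c. {c..c + int (ell_sharp h A)} \<subseteq> sumset h A"
proof -
  let ?N = "{n::nat. n \<ge> 1 \<and> (\<exists>c. {c..c + int n} \<subseteq> sumset h A)}"
  have fin: "finite ?N" by (rule finite_subset[OF _ finite_interval_lengths[OF assms]]) blast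
  then show "n \<ge> 1 \<Longrightarrow> {c..c + int n} \<subseteq> sumset h A \<Longrightarrow> n \<le> ell_sharp h A"
    unfolding ell_sharp_def by (intro Max_ge) auto
  assume "has_interval h A"
  then have "?N \<noteq> {}" unfolding has_interval_def by blast
  with fin have "ell_sharp h A \<in> ?N" unfolding ell_sharp_def by (rule Max_in)
  then show "\<exists>c. {c..c + int (ell_sharp h A)} \<subseteq> sumset h A" by blast
qed

lemma sumset_insert_shift:
  assumes "h \<ge> 1" "s \<in> sumset h A"
  obtains a where "a \<in> A" "s + d \<in> sumset h (insert (a + d) A)"
proof -
  obtain f where f: "s = (\<Sum>i<h. f i)" "\<forall>i<h. f i \<in> A"
    using assms(2) unfolding sumset_def by blast
  obtain m where h: "h = Suc m" using assms(1) by (cases h) auto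
  define g where "g = f(m := f m + d)"
  have "(\<Sum>i<m. g i) = (\<Sum>i<m. f i)" unfolding g_def by (intro sum.cong) auto
  then have "(\<Sum>i<h. g i) = (\<Sum>i<m. f i) + (f m + d)"
    unfolding h by (simp add: g_def)
  also have "\<dots> = s + d" unfolding f(1) h by simp
  finally have "s + d = (\<Sum>i<h. g i)" ..
  moreover have "\<forall>i<h. g i \<in> insert (f m + d) A" using f(2) by (simp add: g_def)
  ultimately have "s + d \<in> sumset h (insert (f m + d) A)" unfolding sumset_def by blast
  moreover have "f m \<in> A" using f(2) h by simp
  ultimately show ?thesis by (intro that)
qed

lemma atLeastAtMost_int_Suc_right:
  "{c..c + int (Suc n)} = insert (c + int (Suc n)) {c..c + int n}"
  by auto

lemma interval_sumset_extend:
  assumes "h \<ge> 1" "{c..c + int n} \<subseteq> sumset h A" "c + int (Suc n) \<notin> sumset h A"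
  obtains x where "x \<notin> A" "\<exists>a\<in>A. a < x" "{c..c + int (Suc n)} \<subseteq> sumset h (insert x A)"
proof -
  have "c \<in> sumset h A" using assms(2) by auto
  then obtain a where a: "a \<in> A" "c + int (Suc n) \<in> sumset h (insert (a + int (Suc n)) A)"
    using sumset_insert_shift[OF assms(1)] by blast
  let ?x = "a + int (Suc n)"
  have "?x \<notin> A" using a(2) assms(3) by (metis insert_absorb)
  moreover have "\<exists>a'\<in>A. a' < ?x" using a(1) by force
  moreover have "{c..c + int (Suc n)} \<subseteq> sumset h (insert ?x A)"
    using a(2) assms(2) sumset_mono[of A "insert ?x A" h]
    unfolding atLeastAtMost_int_Suc_right by blast
  ultimately show ?thesis by (rule that)
qed

lemma ell_grows:
  assumes "h \<ge> 1" "finite A" "0 \<in> sumset h A"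
  obtains x where "x \<notin> A" "\<exists>a\<in>A. a < x" "ell h A < ell h (insert x A)"
proof -
  let ?n = "ell h A"
  have interval: "{0..0 + int ?n} \<subseteq> sumset h A" using ell_interval_subset[OF assms(2,3)] by simp
  moreover have "0 + int (Suc ?n) \<notin> sumset h A"
  proof
    assume "0 + int (Suc ?n) \<in> sumset h A"
    with interval have "{0..int (Suc ?n)} \<subseteq> sumset h A"
      using atLeastAtMost_int_Suc_right[of 0 ?n] by simp
    then have "Suc ?n \<le> ?n" by (rule ell_ge[OF assms(2)])
    then show False by simp
  qed
  ultimately obtain x where x: "x \<notin> A" "\<exists>a\<in>A. a < x" "{0..0 + int (Suc ?n)} \<subseteq> sumset h (insert x A)"
    by (rule interval_sumset_extend[OF assms(1)])
  then have "Suc ?n \<le> ell h (insert x A)" using assms(2) by (intro ell_ge) auto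
  with x show ?thesis by (intro that) auto
qed

lemma ell_sharp_grows:
  assumes "h \<ge> 1" "finite A" "has_interval h A"
  obtains x where "x \<notin> A" "\<exists>a\<in>A. a < x" "has_interval h (insert x A)"
    "ell_sharp h A < ell_sharp h (insert x A)"
proof -
  let ?n = "ell_sharp h A"
  obtain c where interval: "{c..c + int ?n} \<subseteq> sumset h A"
    using ell_sharp_interval_subset[OF assms(2,3)] by blast
  moreover have "c + int (Suc ?n) \<notin> sumset h A"
  proof
    assume "c + int (Suc ?n) \<in> sumset h A"
    with interval have "{c..c + int (Suc ?n)} \<subseteq> sumset h A"
      using atLeastAtMost_int_Suc_right[of c ?n] by simp
    then have "Suc ?n \<le> ?n" using ell_sharp_ge[OF assms(2)] by simp
    then show False by simp
  qed
  ultimately obtain x where x: "x \<notin> A" "\<exists>a\<in>A. a < x" "{c..c + int (Suc ?n)} \<subseteq> sumset h (insert x A)"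
    by (rule interval_sumset_extend[OF assms(1)])
  then have "has_interval h (insert x A)" unfolding has_interval_def by (intro exI[of _ c] exI[of _ "Suc ?n"]) simp
  moreover have "Suc ?n \<le> ell_sharp h (insert x A)" using x(3) assms(2) by (intro ell_sharp_ge) auto
  ultimately show ?thesis using x by (intro that) auto
qed


lemma ell_less_card_power:
  assumes "finite A" "0 \<in> sumset h A"
  shows "ell h A < card A ^ h"
proof -
  have "{0..0 + int (ell h A)} \<subseteq> sumset h A" using ell_interval_subset[OF assms] by simp
  with assms(1) show ?thesis by (rule length_lt_card_power_if_interval_subset_sumset)
qed

lemma ell_sharp_less_card_power:
  assumes "finite A" "has_interval h A"
  shows "ell_sharp h A < card A ^ h"
proof -
  obtain c where "{c..c + int (ell_sharp h A)} \<subseteq> sumset h A"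
    using ell_sharp_interval_subset[OF assms] by blast
  with assms(1) show ?thesis by (rule length_lt_card_power_if_interval_subset_sumset)
qed

lemma strict_mono_on_atLeastI:
  fixes f :: "nat \<Rightarrow> 'a::order"
  assumes step: "\<And>k. a \<le> k \<Longrightarrow> f k < f (Suc k)"
  shows "strict_mono_on {a..} f"
proof (rule strict_mono_onI)
  fix m n assume "m \<in> {a..}" "n \<in> {a..}" "m < n"
  then have "a \<le> m" and "Suc m \<le> n" by auto
  from \<open>Suc m \<le> n\<close> show "f m < f n"
  proof (induction n rule: dec_induct)
    case base
    show ?case using \<open>a \<le> m\<close> by (rule step)
  next
    case (step n)
    have "f n < f (Suc n)" using step.hyps(1) \<open>a \<le> m\<close> by (intro assms) simp
    with step.IH show ?case by (rule order.strict_trans)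
  qed
qed

lemma strict_mono_on_Max_family:
  fixes L :: "'a \<Rightarrow> nat"
  assumes bounded: "\<And>k x. Q k x \<Longrightarrow> L x \<le> b k"
    and nonempty: "\<And>k. a \<le> k \<Longrightarrow> \<exists>x. Q k x"
    and improvable: "\<And>k x. a \<le> k \<Longrightarrow> Q k x \<Longrightarrow> \<exists>y. Q (Suc k) y \<and> L x < L y"
  shows "strict_mono_on {a..} (\<lambda>k. Max {L x | x. Q k x})"
proof (rule strict_mono_on_atLeastI)
  fix k assume k: "a \<le> k"
  let ?S = "\<lambda>k. {L x | x. Q k x}"
  have fin: "finite (?S j)" for j
    by (rule finite_subset[of _ "{..b j}"]) (auto dest: bounded)
  have "?S k \<noteq> {}" using nonempty[OF k] by blast
  then have "Max (?S k) \<in> ?S k" using fin by (rule Max_in[rotated])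
  then obtain x where x: "Q k x" "Max (?S k) = L x" by auto
  obtain y where y: "Q (Suc k) y" "L x < L y" using improvable[OF k x(1)] by blast
  have "L y \<le> Max (?S (Suc k))" using y(1) fin by (intro Max_ge) auto
  with x(2) y(2) show "Max (?S k) < Max (?S (Suc k))" by simp
qed


lemma strict_mono_on_Max_ell:
  assumes "h \<ge> 1" and nonneg: "{0..} \<subseteq> X" and up_closed: "\<And>a x. a \<in> X \<Longrightarrow> a < x \<Longrightarrow> x \<in> X"
  shows "strict_mono_on {1..}
    (\<lambda>k. Max {ell h A | A. A \<subseteq> X \<and> finite A \<and> card A = k \<and> 0 \<in> sumset h A})"
proof (rule strict_mono_on_Max_family)
  fix k A assume "A \<subseteq> X \<and> finite A \<and> card A = k \<and> 0 \<in> sumset h A"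
  then show "ell h A \<le> k ^ h" using ell_less_card_power by fastforce
next
  fix k :: nat assume "1 \<le> k"
  then show "\<exists>A. A \<subseteq> X \<and> finite A \<and> card A = k \<and> 0 \<in> sumset h A"
    using nonneg by (intro exI[of _ "{0..int k - 1}"]) (auto intro: zero_in_sumset)
next
  fix k A assume A: "A \<subseteq> X \<and> finite A \<and> card A = k \<and> 0 \<in> sumset h A"
  then obtain x where x: "x \<notin> A" "\<exists>a\<in>A. a < x" "ell h A < ell h (insert x A)"
    using ell_grows[OF assms(1)] by blast
  have "insert x A \<subseteq> X" using A x(2) up_closed by blast
  moreover have "0 \<in> sumset h (insert x A)" using A sumset_mono[of A "insert x A"] by blast
  ultimately show "\<exists>B. (B \<subseteq> X \<and> finite B \<and> card B = Suc k \<and> 0 \<in> sumset h B) \<and> ell h A < ell h B"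
    using A x by (intro exI[of _ "insert x A"]) auto
qed

lemma strict_mono_on_Max_ell_sharp:
  assumes "h \<ge> 1" and nonneg: "{0..} \<subseteq> X" and up_closed: "\<And>a x. a \<in> X \<Longrightarrow> a < x \<Longrightarrow> x \<in> X"
  shows "strict_mono_on {2..}
    (\<lambda>k. Max {ell_sharp h A | A. A \<subseteq> X \<and> finite A \<and> card A = k \<and> has_interval h A})"
proof (rule strict_mono_on_Max_family)
  fix k A assume "A \<subseteq> X \<and> finite A \<and> card A = k \<and> has_interval h A"
  then show "ell_sharp h A \<le> k ^ h" using ell_sharp_less_card_power by fastforce
next
  fix k :: nat assume "2 \<le> k"
  then have "{0..0 + int 1} \<subseteq> sumset h {0..int k - 1}"
    using subset_sumset_if_zero[OF assms(1), of "{0..int k - 1}"] by auto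
  then have "has_interval h {0..int k - 1}" unfolding has_interval_def by blast
  then show "\<exists>A. A \<subseteq> X \<and> finite A \<and> card A = k \<and> has_interval h A"
    using nonneg by (intro exI[of _ "{0..int k - 1}"]) auto
next
  fix k A assume A: "A \<subseteq> X \<and> finite A \<and> card A = k \<and> has_interval h A"
  then obtain x where x: "x \<notin> A" "\<exists>a\<in>A. a < x" "has_interval h (insert x A)"
      "ell_sharp h A < ell_sharp h (insert x A)"
    using ell_sharp_grows[OF assms(1)] by blast
  have "insert x A \<subseteq> X" using A x(2) up_closed by blast
  then show "\<exists>B. (B \<subseteq> X \<and> finite B \<and> card B = Suc k \<and> has_interval h B)
      \<and> ell_sharp h A < ell_sharp h B"
    using A x by (intro exI[of _ "insert x A"]) auto
qed

theorem mainTheorem2: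
  fixes h :: nat
  assumes "h \<ge> 1"
  shows "strict_mono_on {1..} (n_h h) \<and> strict_mono_on {1..} (m_h h)
       \<and> strict_mono_on {2..} (n_sharp h) \<and> strict_mono_on {2..} (m_sharp h)"
proof -
  have nonneg_up_closed: "a \<in> {0..} \<Longrightarrow> a < x \<Longrightarrow> x \<in> {0..}" for a x :: int by simp
  show ?thesis
    using strict_mono_on_Max_ell[OF assms _ nonneg_up_closed]
      strict_mono_on_Max_ell[OF assms, of UNIV]
      strict_mono_on_Max_ell_sharp[OF assms _ nonneg_up_closed]
      strict_mono_on_Max_ell_sharp[OF assms, of UNIV]
    by (simp add: n_h_def[abs_def] m_h_def[abs_def] n_sharp_def[abs_def] m_sharp_def[abs_def])
qed

end
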